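(* Let $n\in\{3,4,5\}$ and let $\overline D_n:=\langle a,b\mid aba=bab,\ ab^2a=b^{n-2}\rangle$. Then $a^{2n}=\mathbf 1$ in $\overline D_n$. More precisely: for $n=3$, $a^3=(ab)^{-3}=(ab)^3$; for $n=4$, $a^4=a^{-4}$; for $n=5$, $a^5=(ba^{-1})^5$, $b^5=(ab^{-1})^5$ and $a^{10}=a^5b^5=\mathbf 1$. *)

theory Defs
  imports "HOL-Algebra.Group"
begin

end

theory Submission
  imports Defs
begin

text \<open>Put c = a b. The braid relation says c a c^-1 = b, and together with
  a b^2 a = b^(n-2) it gives c^2 = a c a and c a c = a^(n-1). Hence a^n = c^3
  commutes with a and c, so it is central, and b^n = a^n. For n = 3, 4, 5 the second
  relation is moreover a conjugation: b a^-1 b^-1 = c, b^2 a b^-2 = a^-1, and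
  b^2 (b a^-1) b^-2 = a, a^2 (a b^-1) a^-2 = b respectively. Taking n-th powers,
  conjugation fixes the central element, and in each case a^n = a^-n follows.\<close>

lemma (in monoid) conj_nat_pow:
  assumes "g \<in> carrier G" "x \<in> carrier G" "y \<in> carrier G" "g \<otimes> x = y \<otimes> g"
  shows "g \<otimes> x [^] (k::nat) = y [^] k \<otimes> g"
proof (induction k)
  case (Suc k)
  have "g \<otimes> x [^] Suc k = (g \<otimes> x [^] k) \<otimes> x"
    using assms by (simp add: m_assoc)
  also have "\<dots> = y [^] k \<otimes> (g \<otimes> x)"
    using Suc assms by (simp add: m_assoc)
  also have "\<dots> = y [^] Suc k \<otimes> g"
    using assms by (simp add: m_assoc)
  finally show ?case .
qed (use assms in simp)

lemma (in group) pow_eq_of_conj: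
  assumes "h \<in> carrier G" "x \<in> carrier G" "y \<in> carrier G"
    and "h \<otimes> x = y \<otimes> h" and "y [^] k \<otimes> h = h \<otimes> y [^] k"
  shows "x [^] (k::nat) = y [^] k"
proof -
  have "h \<otimes> x [^] k = h \<otimes> y [^] k"
    using conj_nat_pow[OF assms(1-4)] assms(5) by simp
  then show ?thesis using assms by simp
qed

locale Dbar = group G for G (structure) +
  fixes a b :: 'g and n :: nat
  assumes a_closed [simp]: "a \<in> carrier G" and b_closed [simp]: "b \<in> carrier G"
    and braid: "a \<otimes> b \<otimes> a = b \<otimes> a \<otimes> b"
    and relator: "a \<otimes> b \<otimes> b \<otimes> a = b [^] (n - 2)"
    and n_ge_2: "2 \<le> n"
begin

lemma ab_conj_a: "(a \<otimes> b) \<otimes> a = b \<otimes> (a \<otimes> b)"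
  using braid by (simp add: m_assoc)

lemma ab_square: "(a \<otimes> b) \<otimes> (a \<otimes> b) = a \<otimes> (a \<otimes> b) \<otimes> a"
  using braid by (simp add: m_assoc)

lemma baab_eq_pow: "b \<otimes> a \<otimes> a \<otimes> b = a [^] (n - 2)"
proof -
  have "(a \<otimes> b) \<otimes> a [^] (n - 2) = b [^] (n - 2) \<otimes> (a \<otimes> b)"
    by (simp add: conj_nat_pow ab_conj_a)
  also have "\<dots> = (a \<otimes> b) \<otimes> (b \<otimes> a \<otimes> a \<otimes> b)"
    by (simp flip: relator add: m_assoc)
  finally show ?thesis by simp
qed

lemma ab_a_ab_eq_pow: "(a \<otimes> b) \<otimes> a \<otimes> (a \<otimes> b) = a [^] (n - 1)"
proof -
  have "(a \<otimes> b) \<otimes> a \<otimes> (a \<otimes> b) = a \<otimes> a [^] (n - 2)"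
    by (simp add: m_assoc flip: baab_eq_pow)
  also have "\<dots> = a [^] (n - 1)"
    using n_ge_2 nat_pow_Suc2[of a "n - 2"] by (simp add: Suc_diff_Suc numeral_2_eq_2)
  finally show ?thesis .
qed

lemma pow_commutes_ab: "a [^] n \<otimes> (a \<otimes> b) = (a \<otimes> b) \<otimes> a [^] n"
proof -
  define c where "c = a \<otimes> b"
  have c: "c \<in> carrier G" and cc: "c \<otimes> c = a \<otimes> c \<otimes> a"
    and cac: "c \<otimes> a \<otimes> c = a [^] (n - 1)"
    using ab_square ab_a_ab_eq_pow by (simp_all add: c_def)
  have "a [^] n = a \<otimes> (c \<otimes> a \<otimes> c)" "a [^] n = c \<otimes> a \<otimes> c \<otimes> a"
    using n_ge_2 nat_pow_Suc2[of a "n - 1"] nat_pow_Suc[of a "n - 1"] by (simp_all add: cac)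
  then have "a [^] n \<otimes> c = (a \<otimes> c \<otimes> a) \<otimes> (c \<otimes> c)"
    and "c \<otimes> a [^] n = (c \<otimes> c) \<otimes> (a \<otimes> c \<otimes> a)"
    using c by (simp_all add: m_assoc)
  then show ?thesis by (simp add: cc flip: c_def)
qed

lemma pow_commutes_b: "a [^] n \<otimes> b = b \<otimes> a [^] n"
proof -
  have "a \<otimes> (a [^] n \<otimes> b) = a [^] n \<otimes> (a \<otimes> b)"
    using nat_pow_comm[of a n 1] by (simp add: m_assoc [symmetric])
  also have "\<dots> = a \<otimes> (b \<otimes> a [^] n)"
    by (simp add: pow_commutes_ab m_assoc)
  finally show ?thesis by simp
qed

lemma b_pow_eq: "b [^] n = a [^] n"
proof -
  have "(a \<otimes> b) \<otimes> a [^] n = b [^] n \<otimes> (a \<otimes> b)"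
    by (rule conj_nat_pow) (simp_all add: ab_conj_a)
  then have "b [^] n \<otimes> (a \<otimes> b) = a [^] n \<otimes> (a \<otimes> b)"
    by (simp add: pow_commutes_ab)
  then show ?thesis by simp
qed

lemma ab_cube_eq_pow: "(a \<otimes> b) [^] (3::nat) = a [^] n"
proof -
  have "(a \<otimes> b) [^] (3::nat) = (a \<otimes> b) \<otimes> ((a \<otimes> b) \<otimes> (a \<otimes> b))"
    by (simp add: numeral_3_eq_3 m_assoc)
  also have "\<dots> = (a \<otimes> b) \<otimes> a \<otimes> (a \<otimes> b) \<otimes> a"
    by (simp add: ab_square m_assoc)
  also have "\<dots> = a [^] n"
    using n_ge_2 nat_pow_Suc[of a "n - 1"] by (simp add: ab_a_ab_eq_pow)
  finally show ?thesis .
qed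

lemma pow_commutes_b_pow: "a [^] n \<otimes> b [^] (k::nat) = b [^] k \<otimes> a [^] n"
  using group_commutes_pow[of b "a [^] n" k] pow_commutes_b by simp

lemma ab_cube_eq_inv_pow_3:
  assumes "n = 3"
  shows "(a \<otimes> b) [^] (3::nat) = inv (a [^] (3::nat))"
proof -
  have "b \<otimes> inv a = (a \<otimes> b) \<otimes> b"
    using relator assms by (simp add: m_assoc inv_solve_right')
  moreover have "(a \<otimes> b) [^] (3::nat) \<otimes> b = b \<otimes> (a \<otimes> b) [^] (3::nat)"
    using pow_commutes_b assms by (simp add: ab_cube_eq_pow)
  ultimately have "inv a [^] (3::nat) = (a \<otimes> b) [^] (3::nat)"
    by (intro pow_eq_of_conj[where h = b]) simp_all
  then show ?thesis by (simp add: nat_pow_inv)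
qed

lemma inv_pow_eq_pow_4:
  assumes "n = 4"
  shows "inv (a [^] (4::nat)) = a [^] (4::nat)"
proof -
  have "b [^] (2::nat) \<otimes> inv a = a \<otimes> b [^] (2::nat)"
    using relator assms by (subst inv_solve_right') (simp_all add: m_assoc numeral_2_eq_2)
  moreover have "a [^] (4::nat) \<otimes> b [^] (2::nat) = b [^] (2::nat) \<otimes> a [^] (4::nat)"
    using pow_commutes_b_pow assms by simp
  ultimately have "inv a [^] (4::nat) = a [^] (4::nat)"
    by (intro pow_eq_of_conj[where h = "b [^] (2::nat)"]) simp_all
  then show ?thesis by (simp add: nat_pow_inv)
qed

lemma b_inv_a_pow_5:
  assumes "n = 5"
  shows "(b \<otimes> inv a) [^] (5::nat) = a [^] (5::nat)"
proof -
  have "b [^] (2::nat) \<otimes> b \<otimes> inv a = a \<otimes> b [^] (2::nat)"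
    using relator assms by (subst inv_solve_right') (simp_all add: m_assoc numeral_2_eq_2 numeral_3_eq_3)
  moreover have "a [^] (5::nat) \<otimes> b [^] (2::nat) = b [^] (2::nat) \<otimes> a [^] (5::nat)"
    using pow_commutes_b_pow assms by simp
  ultimately show ?thesis
    by (intro pow_eq_of_conj[where h = "b [^] (2::nat)"]) (simp_all add: m_assoc)
qed

lemma a_inv_b_pow_5:
  assumes "n = 5"
  shows "(a \<otimes> inv b) [^] (5::nat) = b [^] (5::nat)"
proof -
  have "a [^] (2::nat) \<otimes> a \<otimes> inv b = b \<otimes> a [^] (2::nat)"
    using baab_eq_pow assms by (subst inv_solve_right') (simp_all add: m_assoc numeral_2_eq_2 numeral_3_eq_3)
  moreover have "b [^] (5::nat) \<otimes> a [^] (2::nat) = a [^] (2::nat) \<otimes> b [^] (5::nat)"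
    using b_pow_eq assms nat_pow_comm by simp
  ultimately show ?thesis
    by (intro pow_eq_of_conj[where h = "a [^] (2::nat)"]) (simp_all add: m_assoc)
qed

lemma inv_pow_eq_pow:
  assumes "n \<in> {3, 4, 5}"
  shows "inv (a [^] n) = a [^] n"
proof -
  from assms consider "n = 3" | "n = 4" | "n = 5" by blast
  then show ?thesis
  proof cases
    case 1
    then show ?thesis using ab_cube_eq_inv_pow_3 ab_cube_eq_pow by simp
  next
    case 2
    then show ?thesis using inv_pow_eq_pow_4 by simp
  next
    case 3
    have "inv (b \<otimes> inv a) = a \<otimes> inv b" by (simp add: inv_mult_group)
    then have "inv (a [^] (5::nat)) = (a \<otimes> inv b) [^] (5::nat)"
      using b_inv_a_pow_5 3 by (metis nat_pow_inv inv_closed m_closed a_closed b_closed)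
    then show ?thesis using a_inv_b_pow_5 b_pow_eq 3 by simp
  qed
qed

lemma pow_double_eq_one:
  assumes "n \<in> {3, 4, 5}"
  shows "a [^] (2 * n) = \<one>"
proof -
  have "a [^] (2 * n) = a [^] n \<otimes> inv (a [^] n)"
    using inv_pow_eq_pow[OF assms] by (simp add: mult_2 nat_pow_mult)
  then show ?thesis by simp
qed

end

theorem mainTheorem6:
  fixes G (structure) and a b :: 'g and n :: nat
  assumes "group G"
    and "a \<in> carrier G" and "b \<in> carrier G"
    and "n \<in> {3, 4, 5}"
    and "a \<otimes> b \<otimes> a = b \<otimes> a \<otimes> b"
    and "a \<otimes> b \<otimes> b \<otimes> a = b [^] (n - 2)"
  shows "a [^] (2 * n) = \<one>
    \<and> (n = 3 \<longrightarrow> a [^] (3::nat) = inv ((a \<otimes> b) [^] (3::nat))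
                   \<and> inv ((a \<otimes> b) [^] (3::nat)) = (a \<otimes> b) [^] (3::nat))
    \<and> (n = 4 \<longrightarrow> a [^] (4::nat) = inv (a [^] (4::nat)))
    \<and> (n = 5 \<longrightarrow> a [^] (5::nat) = (b \<otimes> inv a) [^] (5::nat)
                   \<and> b [^] (5::nat) = (a \<otimes> inv b) [^] (5::nat)
                   \<and> a [^] (10::nat) = a [^] (5::nat) \<otimes> b [^] (5::nat)
                   \<and> a [^] (5::nat) \<otimes> b [^] (5::nat) = \<one>)"
proof -
  interpret group G by fact
  interpret Dbar G a b n
    using assms by unfold_locales auto
  have one: "a [^] (2 * n) = \<one>" and self_inv: "inv (a [^] n) = a [^] n"
    using assms(4) by (rule pow_double_eq_one, rule inv_pow_eq_pow)
  have "n = 3 \<Longrightarrow> inv ((a \<otimes> b) [^] (3::nat)) = a [^] (3::nat)"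
    using ab_cube_eq_inv_pow_3 by simp
  moreover have "n = 3 \<Longrightarrow> (a \<otimes> b) [^] (3::nat) = a [^] (3::nat)"
    using ab_cube_eq_pow by simp
  moreover have "n = 5 \<Longrightarrow> a [^] (10::nat) = a [^] (5::nat) \<otimes> b [^] (5::nat)"
    using b_pow_eq nat_pow_mult[of a 5 5] by simp
  ultimately show ?thesis
    using one self_inv b_inv_a_pow_5 a_inv_b_pow_5 by auto
qed

end
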